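(* For every even $n\ge0$, every integer $r\ge0$ and every graph $G$ of order $n$, the degree $d(G)$ is a non-negative integer, and there is a constant $C$ independent of $p$ such that $\mathcal A_r(G)\le C\,N^{-d(G)}$ for all $p\in(0,1)$; i.e. at fixed order $n$ the amplitude scales at most like $N^{-d(G)}$ as $N\to\infty$.
   Context: Fix $p\in(0,1)$ and $N:=1/(1-p)$. Trees. A 2-rooted ternary tree of order $n$ is a finite plane tree $U$ with a root vertex of degree 2 and $n$ true vertices of degree 4; each edge is internal or a leaf (half-edge). Each true vertex $v$ has parent edge $e_1(v)$ (towards the root) and ordered children edges $e_2(v),e_3(v),e_4(v)$. One root edge has type $\alpha$, the other $\bar\alpha$; if $e_1(v)$ has type $\tau$ then $e_2(v)$ has the other type and $e_3(v),e_4(v)$ have type $\tau$. Leaves of type $\alpha$ are leaves, of type $\bar\alpha$ anti-leaves ($n+1$ each). A heap-ordering labels true vertices bijectively by $\{1,\dots,n\}$, increasing from parent to child. Graphs. For even $n$, a graph of order $n$ is $G=(U,w,w')$: $U$ heap-ordered; $w$ a bijection leaves $\to$ anti-leaves (dashed edges; internal edges are solid); $w'$ a partition of true vertices into $n/2$ pairs (wavy edges) with, for each pair $\{v,v'\}$ ($v$ of smaller label), one of eight propagators in $(S,j,k)=(S_v,j_v,k_v)$, $(S',j',k')=(S_{v'},j_{v'},k_{v'})$: $\delta_{jj'}\delta_{kk'}$, $\delta_{j,S-j'}\delta_{kk'}$, $\delta_{jj'}\delta_{k,S-k'}$, $\delta_{j,S-j'}\delta_{k,S-k'}$, $\delta_{jk'}\delta_{kj'}$,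 $\delta_{j,S-k'}\delta_{kj'}$, $\delta_{jk'}\delta_{k,S-j'}$, $\delta_{j,S-k'}\delta_{k,S-j'}$, together with $S=S'$. Amplitude. A momentum attribution gives each true vertex $S_v\ge0$, $0\le j_v,k_v\le S_v$ and momenta $j_v,S_v-j_v,k_v,S_v-k_v$ to the ends at $v$ of $e_1,\dots,e_4$. For $r\in\mathbb N$ it is admissible if solid edges get equal momenta at both ends, both root edges carry momentum $r$, every dashed edge $e$ joins leaves of equal momentum $m(e)$, and every wavy edge satisfies $S_v=S_{v'}$ and its propagator. $\mathcal A_r(G):=N^{-n}\sum_{\text{admissible}}\prod_{e\text{ dashed}}p^{m(e)}$. Faces and degree. Call the edge-ends at true vertices and at the root slots ($2n+2$ slots). Each propagator of a wavy edge $\{v,v'\}$, together with $S=S'$, identifies each of $j,S-j,k,S-k$ of $v$ with one momentum of $v'$, hence pairs each slot of $v$ with a slot of $v'$; these four pairs are the corners of that wavy edge ($2n$ corners in all). Let $\Gamma$ be the graph on the set of slots whose edges are the solid and dashed edges of $G$, the corners, and one extra edge joining the two root slots; every slot has degree 2, and the connected components (cycles) of $\Gamma$ are the faces; $F(G)$ is their number. Let $E$ be the $(n/2)\times F(G)$ matrix with rows indexed by wavy edges $\omega=\{v,v'\}$ ($v$ of smaller label) and columns by faces, with $E_{\omega f}$ = (number of corners of $\omega$ lying in $f$ that contain $e_1(v)$ or $e_2(v)$) minus (number of corners of $\omega$ lying in $f$ that contain $e_3(v)$ or $e_4(v)$). Let $R(G)$ be the rank of $E$ ($0$ if $n=0$).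 The degree is $d(G):=n-F(G)+R(G)+1$. *)

theory Defs
  imports "HOL-Analysis.Analysis"
begin

text \<open>RS True is the root slot of the root edge of type alpha, RS False that of type
  alpha-bar.  VS v i is the end at true vertex v (labels 1..n, i.e. the heap ordering)
  of the edge e_i(v), i = 1..4.  Types are booleans: True = alpha, False = alpha-bar.\<close>

datatype slot = RS bool | VS nat nat

record graph =
  gorder :: nat                 \<comment> \<open>order n = number of true vertices\<close>
  par   :: "nat \<Rightarrow> slot"       \<comment> \<open>slot (at the root or at a parent vertex) of the other end of e_1(v)\<close>
  tau   :: "nat \<Rightarrow> bool"       \<comment> \<open>type of e_1(v)\<close>
  dw    :: "slot \<Rightarrow> slot"      \<comment> \<open>dashed edges: bijection leaves -> anti-leaves\<close>
  wp    :: "nat \<Rightarrow> nat"        \<comment> \<open>wavy edges: partner of v\<close>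
  pc    :: "nat \<Rightarrow> nat"        \<comment> \<open>propagator code 0..7 of the wavy edge whose smaller vertex is v\<close>

definition vertices :: "graph \<Rightarrow> nat set" where
  "vertices G = {1..gorder G}"

definition all_slots :: "graph \<Rightarrow> slot set" where
  "all_slots G = range RS \<union> {VS v i | v i. v \<in> vertices G \<and> i \<in> {1..4}}"

text \<open>Slots that may carry the upper end of an edge (root slots and child slots).\<close>
definition child_slots :: "graph \<Rightarrow> slot set" where
  "child_slots G = range RS \<union> {VS v i | v i. v \<in> vertices G \<and> i \<in> {2..4}}"

fun slot_type :: "graph \<Rightarrow> slot \<Rightarrow> bool" where
  "slot_type G (RS b) = b"
| "slot_type G (VS v i) = (if i = 2 then \<not> tau G v else tau G v)"

text \<open>Half-edges (leaves in the broad sense): child/root slots not joined to any vertex.\<close>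
definition half_slots :: "graph \<Rightarrow> slot set" where
  "half_slots G = child_slots G - par G ` vertices G"

definition leaves :: "graph \<Rightarrow> slot set" where
  "leaves G = {s \<in> half_slots G. slot_type G s}"

definition antileaves :: "graph \<Rightarrow> slot set" where
  "antileaves G = {s \<in> half_slots G. \<not> slot_type G s}"

fun propag :: "nat \<Rightarrow> nat \<times> nat \<times> nat \<Rightarrow> nat \<times> nat \<times> nat \<Rightarrow> bool" where
  "propag c (S, j, k) (S', j', k') =
     (S = S' \<and>
      (if c = 0 then j = j' \<and> k = k'
       else if c = 1 then j = S - j' \<and> k = k'
       else if c = 2 then j = j' \<and> k = S - k'
       else if c = 3 then j = S - j' \<and> k = S - k'
       else if c = 4 then j = k' \<and> k = j'
       else if c = 5 then j = S - k' \<and> k = j'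
       else if c = 6 then j = k' \<and> k = S - j'
       else j = S - k' \<and> k = S - j'))"

text \<open>Slot pairing (corners) induced by propagator c: slot i of v (momenta
  1:j, 2:S-j, 3:k, 4:S-k) is identified with slot corner_perm c i of v'.\<close>
fun partner_idx :: "nat \<Rightarrow> nat" where
  "partner_idx i = (if i = 1 then 2 else if i = 2 then 1 else if i = 3 then 4 else 3)"

definition sig1 :: "nat \<Rightarrow> nat" where
  "sig1 c = (if c = 0 then 1 else if c = 1 then 2 else if c = 2 then 1 else if c = 3 then 2
             else if c = 4 then 3 else if c = 5 then 4 else if c = 6 then 3 else 4)"

definition sig3 :: "nat \<Rightarrow> nat" where
  "sig3 c = (if c = 0 then 3 else if c = 1 then 3 else if c = 2 then 4 else if c = 3 then 4
             else if c = 4 then 1 else if c = 5 then 1 else if c = 6 then 2 else 2)"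

definition corner_perm :: "nat \<Rightarrow> nat \<Rightarrow> nat" where
  "corner_perm c i = (if i = 1 then sig1 c else if i = 2 then partner_idx (sig1 c)
                      else if i = 3 then sig3 c else partner_idx (sig3 c))"

definition wf_graph :: "graph \<Rightarrow> bool" where
  "wf_graph G \<longleftrightarrow>
     even (gorder G) \<and>
     \<comment> \<open>heap-ordered 2-rooted ternary tree\<close>
     (\<forall>v\<in>vertices G. par G v \<in> child_slots G) \<and>
     inj_on (par G) (vertices G) \<and>
     (\<forall>v\<in>vertices G. \<forall>u i. par G v = VS u i \<longrightarrow> u < v) \<and>
     (\<forall>v\<in>vertices G. tau G v = slot_type G (par G v)) \<and>
     \<comment> \<open>dashed edges\<close>
     bij_betw (dw G) (leaves G) (antileaves G) \<and>
     \<comment> \<open>wavy edges: a perfect matching of the true vertices with propagators\<close>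
     (\<forall>v\<in>vertices G. wp G v \<in> vertices G \<and> wp G v \<noteq> v \<and> wp G (wp G v) = v) \<and>
     (\<forall>v\<in>vertices G. v < wp G v \<longrightarrow> pc G v < 8)"

type_synonym attribution = "(nat \<Rightarrow> nat) \<times> (nat \<Rightarrow> nat) \<times> (nat \<Rightarrow> nat)"

fun mom :: "nat \<Rightarrow> attribution \<Rightarrow> slot \<Rightarrow> nat" where
  "mom r a (RS b) = r"
| "mom r (S, j, k) (VS v i) =
     (if i = 1 then j v else if i = 2 then S v - j v else if i = 3 then k v else S v - k v)"

text \<open>Admissible momentum attributions (values are normalised to 0 off the vertex set so
  that each attribution is counted once).  The momentum at the root slots is r, so the
  solid-edge condition at a root edge expresses that it carries momentum r.\<close>
definition admissible :: "graph \<Rightarrow> nat \<Rightarrow> attribution set" where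
  "admissible G r = {(S, j, k).
     (\<forall>v. v \<notin> vertices G \<longrightarrow> S v = 0 \<and> j v = 0 \<and> k v = 0) \<and>
     (\<forall>v\<in>vertices G. j v \<le> S v \<and> k v \<le> S v) \<and>
     (\<forall>v\<in>vertices G. mom r (S, j, k) (par G v) = mom r (S, j, k) (VS v 1)) \<and>
     (\<forall>l\<in>leaves G. mom r (S, j, k) l = mom r (S, j, k) (dw G l)) \<and>
     (\<forall>v\<in>vertices G. v < wp G v \<longrightarrow>
        S v = S (wp G v) \<and>
        propag (pc G v) (S v, j v, k v) (S (wp G v), j (wp G v), k (wp G v)))}"

definition NN :: "real \<Rightarrow> real" where
  "NN p = 1 / (1 - p)"

text \<open>Amplitude, as a sum of non-negative terms in [0, infinity].  Dashed edges are in
  bijection with leaves, and m(e) is the momentum of the leaf.\<close>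
definition amplitude :: "real \<Rightarrow> nat \<Rightarrow> graph \<Rightarrow> ennreal" where
  "amplitude p r G =
     ennreal (NN p powr (- real (gorder G))) *
     (\<Sum>\<^sub>\<infinity>a\<in>admissible G r. ennreal (\<Prod>l\<in>leaves G. p ^ mom r a l))"

definition gamma_adj :: "graph \<Rightarrow> slot \<Rightarrow> slot \<Rightarrow> bool" where
  "gamma_adj G s t \<longleftrightarrow>
     (\<exists>v\<in>vertices G. {s, t} = {par G v, VS v 1}) \<or>
     (\<exists>l\<in>leaves G. {s, t} = {l, dw G l}) \<or>
     (\<exists>v\<in>vertices G. v < wp G v \<and>
        (\<exists>i\<in>{1..4}. {s, t} = {VS v i, VS (wp G v) (corner_perm (pc G v) i)})) \<or>
     {s, t} = {RS True, RS False}"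

definition faces :: "graph \<Rightarrow> slot set set" where
  "faces G = all_slots G // ({(s, t). gamma_adj G s t}\<^sup>*)"

definition nfaces :: "graph \<Rightarrow> nat" where
  "nfaces G = card (faces G)"

text \<open>Rows of E are indexed by the smaller vertex v of each wavy edge.\<close>
definition wavy_rows :: "graph \<Rightarrow> nat set" where
  "wavy_rows G = {v \<in> vertices G. v < wp G v}"

definition Emat :: "graph \<Rightarrow> nat \<Rightarrow> slot set \<Rightarrow> real" where
  "Emat G v f = real (card {i \<in> {1, 2::nat}. VS v i \<in> f}) - real (card {i \<in> {3, 4::nat}. VS v i \<in> f})"

definition lin_indep_rows :: "('r \<Rightarrow> 'c \<Rightarrow> real) \<Rightarrow> 'c set \<Rightarrow> 'r set \<Rightarrow> bool" where
  "lin_indep_rows M J S \<longleftrightarrow>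
     (\<forall>c :: 'r \<Rightarrow> real. (\<forall>f\<in>J. (\<Sum>v\<in>S. c v * M v f) = 0) \<longrightarrow> (\<forall>v\<in>S. c v = 0))"

definition mat_rank :: "('r \<Rightarrow> 'c \<Rightarrow> real) \<Rightarrow> 'r set \<Rightarrow> 'c set \<Rightarrow> nat" where
  "mat_rank M I J = Max {card S | S. S \<subseteq> I \<and> lin_indep_rows M J S}"

definition rankE :: "graph \<Rightarrow> nat" where
  "rankE G = mat_rank (Emat G) (wavy_rows G) (faces G)"

definition gdegree :: "graph \<Rightarrow> int" where
  "gdegree G = int (gorder G) - int (nfaces G) + int (rankE G) + 1"

end

theory Submission
  imports Defs
begin

text \<open>
  Momentum is constant along each face, so an admissible attribution gives a vector m of
  natural numbers indexed by the faces. At every vertex the momenta j + (S - j) - k - (S - k)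
  cancel, so m solves E m = 0, and m takes the value r at the root face. The root row together
  with R independent rows of E is an independent system, and Gaussian elimination leaves
  F - R - 1 free faces on whose values m, and hence the attribution, depends injectively. Every
  momentum is at most 2^n times the total leaf momentum L, the exponent of p in the weight, so
  the amplitude is at most N^(-n) times a sum of p^(|z|/c), for a constant c, over distinct
  vectors z of natural numbers with F - R - 1 entries, that is at most C N^(F - R - 1 - n),
  which is C N^(-d).

  The degree is non-negative because a solution of the homogeneous system is already determined
  by its values at the faces of e_2 and e_3 of the smaller vertex of each wavy edge: the faces at
  the larger vertex are those of its partner through the corners, the face of e_1 is that of a
  slot of the parent, and the face of e_4 is then fixed by the row of E. Hence F - R - 1 <= n.
\<close>

section \<open>Kernels and pivot columns of row systems\<close>

definition row_kernel :: "('r \<Rightarrow> 'c \<Rightarrow> real) \<Rightarrow> 'r set \<Rightarrow> 'c set \<Rightarrow> ('c \<Rightarrow> real) set" where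
  "row_kernel M I J = {m. \<forall>i\<in>I. (\<Sum>f\<in>J. M i f * m f) = 0}"

lemma lin_indep_rowsD:
  assumes "lin_indep_rows M J S" "\<forall>f\<in>J. (\<Sum>v\<in>S. c v * M v f) = 0" "v \<in> S"
  shows "c v = 0"
  using assms unfolding lin_indep_rows_def by blast

lemma lin_indep_rows_cong:
  assumes "\<And>i f. i \<in> S \<Longrightarrow> f \<in> J \<Longrightarrow> M i f = M' i f"
  shows "lin_indep_rows M J S \<longleftrightarrow> lin_indep_rows M' J S"
  using assms unfolding lin_indep_rows_def by (simp cong: sum.cong)

lemma lin_indep_rows_row_nonzero:
  assumes "lin_indep_rows M J S" "i \<in> S" "finite S"
  obtains f where "f \<in> J" "M i f \<noteq> 0"
proof -
  have "\<exists>f\<in>J. M i f \<noteq> 0"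
  proof (rule ccontr)
    assume "\<not> ?thesis"
    then have "\<forall>f\<in>J. (\<Sum>v\<in>S. of_bool (v = i) * M v f) = 0"
      using assms(2,3) by (simp add: if_distrib[of "\<lambda>x. x * _"] cong: if_cong)
    from lin_indep_rowsD[OF assms(1) this assms(2)] show False by simp
  qed
  then show thesis using that by blast
qed

definition gauss_eliminate :: "('r \<Rightarrow> 'c \<Rightarrow> real) \<Rightarrow> 'r \<Rightarrow> 'c \<Rightarrow> 'r \<Rightarrow> 'c \<Rightarrow> real" where
  "gauss_eliminate M i0 f0 i f = M i f - M i f0 / M i0 f0 * M i0 f"

definition pivot_columns :: "('r \<Rightarrow> 'c \<Rightarrow> real) \<Rightarrow> 'r set \<Rightarrow> 'c set \<Rightarrow> 'c set \<Rightarrow> bool" where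
  "pivot_columns M I J P \<longleftrightarrow> P \<subseteq> J \<and> card P = card I \<and>
     (\<forall>m\<in>row_kernel M I J. (\<forall>f\<in>J - P. m f = 0) \<longrightarrow> (\<forall>f\<in>P. m f = 0)) \<and>
     (\<forall>x. \<exists>m\<in>row_kernel M I J. \<forall>f\<in>J - P. m f = x f)"

lemma lin_indep_rows_gauss_eliminate:
  assumes indep: "lin_indep_rows M J (insert i0 I)" and "i0 \<notin> I" "finite I"
    and "M i0 f0 \<noteq> 0"
  shows "lin_indep_rows (gauss_eliminate M i0 f0) (J - {f0}) I"
  unfolding lin_indep_rows_def
proof (intro allI impI)
  let ?M' = "gauss_eliminate M i0 f0"
  fix c assume c: "\<forall>f\<in>J - {f0}. (\<Sum>v\<in>I. c v * ?M' v f) = 0"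
  have "?M' v f0 = 0" for v using assms(4) by (simp add: gauss_eliminate_def)
  with c have c_all: "\<forall>f\<in>J. (\<Sum>v\<in>I. c v * ?M' v f) = 0" by auto
  define c' where "c' v = (if v = i0 then - (\<Sum>i\<in>I. c i * (M i f0 / M i0 f0)) else c v)" for v
  have "(\<Sum>v\<in>insert i0 I. c' v * M v f) = (\<Sum>v\<in>I. c v * ?M' v f)" for f
  proof -
    have "(\<Sum>v\<in>I. c' v * M v f) = (\<Sum>v\<in>I. c v * M v f)"
      using assms(2) by (intro sum.cong) (auto simp: c'_def)
    then show ?thesis
      using assms(2,3)
      by (simp add: c'_def gauss_eliminate_def right_diff_distrib sum_subtractf sum_distrib_left
          sum_divide_distrib mult_ac)
  qed
  with c_all have "\<forall>f\<in>J. (\<Sum>v\<in>insert i0 I. c' v * M v f) = 0" by simp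
  then have "\<forall>v\<in>insert i0 I. c' v = 0" using lin_indep_rowsD[OF indep] by blast
  then show "\<forall>v\<in>I. c v = 0" using assms(2) by (auto simp: c'_def split: if_splits)
qed

lemma row_kernel_gauss_eliminate:
  assumes "finite J" "f0 \<in> J" "M i0 f0 \<noteq> 0"
  shows "m \<in> row_kernel M (insert i0 I) J \<longleftrightarrow>
    m \<in> row_kernel (gauss_eliminate M i0 f0) I (J - {f0}) \<and> (\<Sum>f\<in>J. M i0 f * m f) = 0"
proof -
  have J_split: "(\<Sum>f\<in>J. g f) = g f0 + (\<Sum>f\<in>J - {f0}. g f)" for g :: "_ \<Rightarrow> real"
    using assms(1,2) by (simp add: sum.remove)
  have "(\<Sum>f\<in>J - {f0}. gauss_eliminate M i0 f0 i f * m f) = (\<Sum>f\<in>J - {f0}. M i f * m f)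
      - M i f0 / M i0 f0 * (\<Sum>f\<in>J - {f0}. M i0 f * m f)" for i
    by (simp add: gauss_eliminate_def left_diff_distrib sum_subtractf sum_distrib_left mult.assoc)
  then have "(\<Sum>f\<in>J - {f0}. gauss_eliminate M i0 f0 i f * m f)
      = (\<Sum>f\<in>J. M i f * m f) - M i f0 / M i0 f0 * (\<Sum>f\<in>J. M i0 f * m f)" for i
    using assms(3) by (simp add: J_split field_simps)
  then show ?thesis unfolding row_kernel_def by auto
qed

lemma pivot_columns_insert:
  assumes "finite J" "f0 \<in> J" "M i0 f0 \<noteq> 0" "finite I" "i0 \<notin> I"
    and pivots: "pivot_columns (gauss_eliminate M i0 f0) I (J - {f0}) P"
  shows "pivot_columns M (insert i0 I) J (insert f0 P)"
proof -
  let ?M' = "gauss_eliminate M i0 f0"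
  note kernel_iff = row_kernel_gauss_eliminate[of J f0 M i0 _ I, OF assms(1-3)]
  have J_split: "(\<Sum>f\<in>J. g f) = g f0 + (\<Sum>f\<in>J - {f0}. g f)" for g :: "_ \<Rightarrow> real"
    using assms(1,2) by (simp add: sum.remove)
  have P: "P \<subseteq> J - {f0}" "card P = card I" "finite P"
    using pivots assms(1) finite_subset unfolding pivot_columns_def by blast+
  have off_P: "J - insert f0 P = J - {f0} - P" by blast
  have "\<forall>f\<in>insert f0 P. m f = 0"
    if m: "m \<in> row_kernel M (insert i0 I) J" and vanish: "\<forall>f\<in>J - insert f0 P. m f = 0" for m
  proof -
    have "\<forall>f\<in>P. m f = 0" using pivots m vanish by (simp add: pivot_columns_def kernel_iff off_P)
    with vanish have "\<forall>f\<in>J - {f0}. m f = 0" by blast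
    then have "M i0 f0 * m f0 = 0" using m by (simp add: kernel_iff J_split)
    with assms(3) \<open>\<forall>f\<in>P. m f = 0\<close> show ?thesis by simp
  qed
  moreover have "\<exists>m\<in>row_kernel M (insert i0 I) J. \<forall>f\<in>J - insert f0 P. m f = x f" for x
  proof -
    obtain m0 where m0: "m0 \<in> row_kernel ?M' I (J - {f0})" "\<forall>f\<in>J - {f0} - P. m0 f = x f"
      using pivots unfolding pivot_columns_def by blast
    define m where "m = m0(f0 := - (\<Sum>f\<in>J - {f0}. M i0 f * m0 f) / M i0 f0)"
    have agree: "\<forall>f\<in>J - {f0}. m f = m0 f" by (simp add: m_def)
    then have agree_sum: "(\<Sum>f\<in>J - {f0}. g f * m f) = (\<Sum>f\<in>J - {f0}. g f * m0 f)" for g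
      by (intro sum.cong) auto
    have "(\<Sum>f\<in>J. M i0 f * m f) = 0"
      using assms(3) by (simp add: J_split agree_sum) (simp add: m_def)
    then have "m \<in> row_kernel M (insert i0 I) J"
      unfolding kernel_iff using m0(1) by (simp add: row_kernel_def agree_sum)
    with m0(2) agree show ?thesis unfolding off_P by (intro bexI[of _ m]) auto
  qed
  moreover have "card (insert f0 P) = card (insert i0 I)"
    using P assms(4,5) by (simp add: card_insert_if subset_Diff_insert)
  ultimately show ?thesis
    using P(1) assms(2) by (auto simp: pivot_columns_def)
qed

lemma lin_indep_rows_pivot_columns:
  assumes "finite I" "finite J" "lin_indep_rows M J I"
  obtains P where "pivot_columns M I J P"
proof -
  have "\<exists>P. pivot_columns M I J P"
    using assms
  proof (induction I arbitrary: M J rule: finite_induct)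
    case empty
    show ?case by (intro exI[of _ "{}"]) (auto simp: pivot_columns_def row_kernel_def)
  next
    case (insert i0 I)
    obtain f0 where f0: "f0 \<in> J" "M i0 f0 \<noteq> 0"
      using lin_indep_rows_row_nonzero[OF insert.prems(2)] insert.hyps(1) by blast
    have "lin_indep_rows (gauss_eliminate M i0 f0) (J - {f0}) I"
      using insert.prems(2) insert.hyps(2,1) f0(2) by (rule lin_indep_rows_gauss_eliminate)
    then have "\<exists>P. pivot_columns (gauss_eliminate M i0 f0) I (J - {f0}) P"
      using insert.prems(1) by (intro insert.IH) simp_all
    then show ?case
      using pivot_columns_insert[of J f0 M i0 I, OF insert.prems(1) f0 insert.hyps(1,2)] by blast
  qed
  with that show thesis by blast
qed

lemma card_le_if_lin_indep_rows:
  assumes "finite I" "finite J" "lin_indep_rows M J I"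
  shows "card I \<le> card J"
proof -
  obtain P where "pivot_columns M I J P" by (rule lin_indep_rows_pivot_columns[OF assms])
  then have "P \<subseteq> J" "card P = card I" by (simp_all add: pivot_columns_def)
  with assms(2) show ?thesis by (metis card_mono)
qed

lemma lin_indep_rows_insert:
  assumes "lin_indep_rows M J I" "finite I" "i0 \<notin> I"
    and "(\<Sum>f\<in>J. M i0 f * u f) \<noteq> 0" "\<forall>i\<in>I. (\<Sum>f\<in>J. M i f * u f) = 0"
  shows "lin_indep_rows M J (insert i0 I)"
  unfolding lin_indep_rows_def
proof (intro allI impI)
  fix c assume c: "\<forall>f\<in>J. (\<Sum>v\<in>insert i0 I. c v * M v f) = 0"
  have "0 = (\<Sum>f\<in>J. (\<Sum>v\<in>insert i0 I. c v * M v f) * u f)"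
    using c by simp
  also have "\<dots> = (\<Sum>v\<in>insert i0 I. c v * (\<Sum>f\<in>J. M v f * u f))"
    by (simp add: sum_distrib_left sum_distrib_right mult.assoc sum.swap[of _ J])
  also have "\<dots> = c i0 * (\<Sum>f\<in>J. M i0 f * u f)"
    using assms(2,3,5) by simp
  finally have "c i0 = 0" using assms(4) by simp
  with c assms(2,3) have "\<forall>f\<in>J. (\<Sum>v\<in>I. c v * M v f) = 0" by simp
  with \<open>c i0 = 0\<close> assms(1) show "\<forall>v\<in>insert i0 I. c v = 0"
    unfolding lin_indep_rows_def by blast
qed

lemma mat_rank_basis:
  assumes "finite W"
  obtains I where "I \<subseteq> W" "card I = mat_rank M W J" "lin_indep_rows M J I"
    "\<And>w. w \<in> W - I \<Longrightarrow> \<not> lin_indep_rows M J (insert w I)"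
proof -
  let ?ranks = "{card S | S. S \<subseteq> W \<and> lin_indep_rows M J S}"
  have "?ranks \<subseteq> card ` Pow W" by blast
  then have "finite ?ranks" by (rule finite_subset) (simp add: assms)
  moreover have "card {} \<in> ?ranks"
    by (intro CollectI exI[of _ "{}"]) (simp add: lin_indep_rows_def)
  ultimately have "Max ?ranks \<in> ?ranks" by (intro Max_in) blast+
  then obtain I where I: "I \<subseteq> W" "lin_indep_rows M J I" "Max ?ranks = card I"
    by blast
  have "finite I" using I(1) assms by (rule finite_subset)
  have maximal: "\<not> lin_indep_rows M J (insert w I)" if w: "w \<in> W - I" for w
  proof
    assume "lin_indep_rows M J (insert w I)"
    with w I(1) have "card (insert w I) \<in> ?ranks" by blast
    with \<open>finite ?ranks\<close> have "card (insert w I) \<le> Max ?ranks" by (rule Max_ge)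
    with w I(3) \<open>finite I\<close> show False by simp
  qed
  have "card I = mat_rank M W J" using I(3) by (simp add: mat_rank_def)
  from that[OF I(1) this I(2) maximal] show thesis .
qed

text \<open>Every row outside a maximal independent set is a combination of the rows in it.\<close>
lemma row_kernel_maximal_lin_indep_rows:
  assumes "finite J" "finite I" "I \<subseteq> W" "lin_indep_rows M J I"
    and maximal: "\<And>w. w \<in> W - I \<Longrightarrow> \<not> lin_indep_rows M J (insert w I)"
  shows "row_kernel M I J \<subseteq> row_kernel M W J"
proof
  fix m assume m: "m \<in> row_kernel M I J"
  have "(\<Sum>f\<in>J. M w f * m f) = 0" if w: "w \<in> W - I" for w
  proof -
    obtain c where c: "\<forall>f\<in>J. (\<Sum>v\<in>insert w I. c v * M v f) = 0"
      and nz: "\<exists>v\<in>insert w I. c v \<noteq> 0"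
      using maximal[OF w] unfolding lin_indep_rows_def by blast
    have split: "(\<Sum>v\<in>insert w I. c v * M v f) = c w * M w f + (\<Sum>v\<in>I. c v * M v f)" for f
      using w assms(2) by simp
    have "c w \<noteq> 0"
    proof
      assume "c w = 0"
      with c split have "\<forall>f\<in>J. (\<Sum>v\<in>I. c v * M v f) = 0" by simp
      with assms(4) have "\<forall>v\<in>I. c v = 0" unfolding lin_indep_rows_def by blast
      with nz \<open>c w = 0\<close> show False by blast
    qed
    have row_w: "c w * M w f = - (\<Sum>v\<in>I. c v * M v f)" if "f \<in> J" for f
      using c split that by (simp add: eq_neg_iff_add_eq_0)
    have "c w * (\<Sum>f\<in>J. M w f * m f) = (\<Sum>f\<in>J. (c w * M w f) * m f)"
      by (simp add: sum_distrib_left mult.assoc)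
    also have "\<dots> = (\<Sum>f\<in>J. - (\<Sum>v\<in>I. c v * M v f) * m f)"
      using row_w by (intro sum.cong) auto
    also have "\<dots> = - (\<Sum>v\<in>I. c v * (\<Sum>f\<in>J. M v f * m f))"
      by (simp add: sum_distrib_left sum_distrib_right sum_negf mult.assoc sum.swap[of _ J])
    also have "\<dots> = 0" using m by (simp add: row_kernel_def)
    finally show ?thesis using \<open>c w \<noteq> 0\<close> by simp
  qed
  with m show "m \<in> row_kernel M W J" by (auto simp: row_kernel_def)
qed

lemma pivot_columns_unit_vectors:
  assumes "pivot_columns M I J P"
  obtains b where "\<And>q. b q \<in> row_kernel M I J" "\<And>q f. f \<in> J - P \<Longrightarrow> b q f = of_bool (f = q)"
proof -
  from assms have extend: "\<forall>x. \<exists>m\<in>row_kernel M I J. \<forall>f\<in>J - P. m f = x f"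
    by (simp add: pivot_columns_def)
  have "\<forall>q. \<exists>m. m \<in> row_kernel M I J \<and> (\<forall>f\<in>J - P. m f = of_bool (f = q))"
  proof
    fix q
    show "\<exists>m. m \<in> row_kernel M I J \<and> (\<forall>f\<in>J - P. m f = of_bool (f = q))"
      using extend[rule_format, of "\<lambda>f. of_bool (f = q)"] by blast
  qed
  from choice[OF this] obtain b
    where "\<forall>q. b q \<in> row_kernel M I J \<and> (\<forall>f\<in>J - P. b q f = of_bool (f = q))" ..
  with that show thesis by blast
qed

text \<open>Rank--nullity: the nullity card J - card I is at most the number of coordinates that
  determine a kernel vector.\<close>
lemma card_le_if_row_kernel_determined:
  assumes "finite I" "finite J" "lin_indep_rows M J I" "finite D"
    and determined: "\<And>m. m \<in> row_kernel M I J \<Longrightarrow> \<forall>f\<in>D. m f = 0 \<Longrightarrow> \<forall>f\<in>J. m f = 0"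
  shows "card J \<le> card I + card D"
proof -
  obtain P where P: "pivot_columns M I J P" by (rule lin_indep_rows_pivot_columns[OF assms(1-3)])
  obtain b where b: "\<And>q. b q \<in> row_kernel M I J" "\<And>q f. f \<in> J - P \<Longrightarrow> b q f = of_bool (f = q)"
    using pivot_columns_unit_vectors[OF P] by blast
  have "finite (J - P)" using assms(2) by simp
  have "lin_indep_rows b D (J - P)"
    unfolding lin_indep_rows_def
  proof (intro allI impI)
    fix c assume c: "\<forall>f\<in>D. (\<Sum>q\<in>J - P. c q * b q f) = 0"
    define m where "m f = (\<Sum>q\<in>J - P. c q * b q f)" for f
    have "(\<Sum>f\<in>J. M i f * m f) = (\<Sum>q\<in>J - P. c q * (\<Sum>f\<in>J. M i f * b q f))" for i
      by (simp add: m_def sum_distrib_left mult.left_commute sum.swap[of _ J])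
    then have "m \<in> row_kernel M I J"
      using b(1) by (simp add: row_kernel_def)
    from determined[OF this] c have "\<forall>f\<in>J. m f = 0" by (simp add: m_def)
    moreover have "m q = c q" if "q \<in> J - P" for q
    proof -
      have "m q = (\<Sum>q'\<in>J - P. if q' = q then c q' else 0)"
        unfolding m_def using that b(2) by (intro sum.cong) auto
      with that \<open>finite (J - P)\<close> show ?thesis by simp
    qed
    ultimately show "\<forall>q\<in>J - P. c q = 0" by simp
  qed
  then have "card (J - P) \<le> card D"
    using \<open>finite (J - P)\<close> assms(4) by (rule card_le_if_lin_indep_rows[rotated 2])
  moreover have "P \<subseteq> J" "card P = card I" using P by (simp_all add: pivot_columns_def)
  ultimately show ?thesis
    using assms(2) by (simp add: card_Diff_subset finite_subset)
qed

section \<open>Geometric sums over injectively coded families\<close>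

lemma sum_inj_prod_power_le:
  fixes x :: real and y :: "'a \<Rightarrow> 'q \<Rightarrow> nat"
  assumes "finite Q" "0 \<le> x" "x < 1" "finite F" "inj_on y F" "\<And>a. a \<in> F \<Longrightarrow> y a \<in> extensional Q"
  shows "(\<Sum>a\<in>F. \<Prod>q\<in>Q. x ^ y a q) \<le> (1 / (1 - x)) ^ card Q"
proof -
  define T where "T = Max (insert 0 {y a q | a q. a \<in> F \<and> q \<in> Q})"
  have "finite {y a q | a q. a \<in> F \<and> q \<in> Q}"
    using assms(1,4) by (simp add: finite_image_set2)
  then have "y a q \<le> T" if "a \<in> F" "q \<in> Q" for a q
    unfolding T_def using that by (intro Max_ge) auto
  then have "y ` F \<subseteq> PiE Q (\<lambda>_. {..T})"
    using assms(6) by (auto simp: PiE_def Pi_def)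
  have geometric: "(\<Sum>t\<le>T. x ^ t) \<le> 1 / (1 - x)"
  proof -
    have "(\<Sum>t<Suc T. x ^ t) \<le> (\<Sum>t. x ^ t)"
      using assms(2,3) by (intro sum_le_suminf summable_geometric) auto
    with assms(2,3) show ?thesis by (simp add: suminf_geometric lessThan_Suc_atMost)
  qed
  have "(\<Sum>a\<in>F. \<Prod>q\<in>Q. x ^ y a q) = (\<Sum>z\<in>y ` F. \<Prod>q\<in>Q. x ^ z q)"
    using assms(5) by (simp add: sum.reindex)
  also have "\<dots> \<le> (\<Sum>z\<in>PiE Q (\<lambda>_. {..T}). \<Prod>q\<in>Q. x ^ z q)"
    using \<open>y ` F \<subseteq> _\<close> assms(1,2) by (intro sum_mono2 finite_PiE prod_nonneg) auto
  also have "\<dots> = (\<Prod>q\<in>Q. \<Sum>t\<le>T. x ^ t)"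
    using assms(1) by (subst prod_sum_PiE[where f = "\<lambda>_ t. x ^ t"]) auto
  also have "\<dots> \<le> (\<Prod>q\<in>Q. 1 / (1 - x))"
    using assms(2) geometric by (intro prod_mono) (auto intro: sum_nonneg)
  finally show ?thesis by simp
qed

lemma one_minus_root_bound:
  fixes p :: real
  assumes "0 < p" "p < 1" "0 < c"
  shows "1 / (1 - root c p) \<le> real c / (1 - p)"
proof -
  have "root c p < 1" "0 < root c p" using assms by (auto intro: real_root_gt_zero)
  have "1 + real c * (root c p - 1) \<le> (1 + (root c p - 1)) ^ c"
    using \<open>0 < root c p\<close> by (intro Bernoulli_inequality) simp
  then have "1 - p \<le> real c * (1 - root c p)"
    using assms by (simp add: algebra_simps)
  with assms \<open>root c p < 1\<close> show ?thesis by (simp add: field_simps)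
qed

lemma infsum_power_le_if_inj_coordinates:
  fixes p :: real and y :: "'a \<Rightarrow> 'q \<Rightarrow> nat" and L :: "'a \<Rightarrow> nat"
  assumes "finite Q" "0 < p" "p < 1" "0 < c"
    and inj: "inj_on y A" and ext: "\<And>a. a \<in> A \<Longrightarrow> y a \<in> extensional Q"
    and coercive: "\<And>a. a \<in> A \<Longrightarrow> (\<Sum>q\<in>Q. y a q) \<le> c * L a"
  shows "(\<Sum>\<^sub>\<infinity>a\<in>A. ennreal (p ^ L a)) \<le> ennreal ((real c / (1 - p)) ^ card Q)"
proof (rule infsum_le_finite_sums)
  show "(\<lambda>a. ennreal (p ^ L a)) summable_on A" by (rule nonneg_summable_on_complete) simp
next
  fix F assume F: "finite F" "F \<subseteq> A"
  define x where "x = root c p"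
  have x: "0 < x" "x < 1" "x ^ c = p"
    using assms(2-4) by (auto simp: x_def intro: real_root_gt_zero)
  have "p ^ L a \<le> (\<Prod>q\<in>Q. x ^ y a q)" if "a \<in> A" for a
  proof -
    have "p ^ L a = x ^ (c * L a)" using x(3) by (simp add: power_mult)
    also have "\<dots> \<le> x ^ (\<Sum>q\<in>Q. y a q)"
      using x coercive[OF that] by (intro power_decreasing) auto
    finally show ?thesis by (simp add: power_sum)
  qed
  then have "(\<Sum>a\<in>F. p ^ L a) \<le> (\<Sum>a\<in>F. \<Prod>q\<in>Q. x ^ y a q)"
    using F(2) by (intro sum_mono) auto
  also have "\<dots> \<le> (1 / (1 - x)) ^ card Q"
    using F x inj ext by (intro sum_inj_prod_power_le assms(1) inj_on_subset[OF inj]) auto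
  also have "\<dots> \<le> (real c / (1 - p)) ^ card Q"
    using x unfolding x_def by (intro power_mono one_minus_root_bound assms(2-4)) auto
  finally have "(\<Sum>a\<in>F. p ^ L a) \<le> (real c / (1 - p)) ^ card Q" .
  moreover have "(\<Sum>a\<in>F. ennreal (p ^ L a)) = ennreal (\<Sum>a\<in>F. p ^ L a)"
    using assms(2) by (intro sum_ennreal) auto
  ultimately show "(\<Sum>a\<in>F. ennreal (p ^ L a)) \<le> ennreal ((real c / (1 - p)) ^ card Q)"
    by (simp add: ennreal_leI)
qed

section \<open>Graphs of order n\<close>

lemma corner_perm_surj:
  assumes "i' \<in> {1..4}"
  obtains i where "i \<in> {1..4}" "corner_perm c i = i'"
proof -
  have range: "{1..4::nat} = {1, 2, 3, 4}" by auto
  have "i' = 1 \<or> i' = 2 \<or> i' = 3 \<or> i' = 4" using assms by auto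
  moreover have "c = 0 \<or> c = 1 \<or> c = 2 \<or> c = 3 \<or> c = 4 \<or> c = 5 \<or> c = 6 \<or> 7 \<le> c" by auto
  ultimately have "\<exists>i\<in>{1..4}. corner_perm c i = i'"
    unfolding range by (elim disjE) (simp_all add: corner_perm_def sig1_def sig3_def)
  with that show thesis by blast
qed

lemma mom_corner_perm:
  assumes "propag c (S v, j v, k v) (S w, j w, k w)"
    and "j v \<le> S v" "k v \<le> S v" "j w \<le> S w" "k w \<le> S w" "i \<in> {1..4}"
  shows "mom r (S, j, k) (VS v i) = mom r (S, j, k) (VS w (corner_perm c i))"
proof -
  have "i = 1 \<or> i = 2 \<or> i = 3 \<or> i = 4" using assms(6) by auto
  moreover have "c = 0 \<or> c = 1 \<or> c = 2 \<or> c = 3 \<or> c = 4 \<or> c = 5 \<or> c = 6 \<or> 7 \<le> c" by auto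
  ultimately show ?thesis using assms(1-5)
    by (elim disjE) (auto simp: corner_perm_def sig1_def sig3_def)
qed

locale graph_of_order =
  fixes G :: graph
  assumes wf_graph: "wf_graph G"
begin

lemma par_child_slot: "v \<in> vertices G \<Longrightarrow> par G v \<in> child_slots G"
  using wf_graph by (simp add: wf_graph_def)

lemma par_heap: "v \<in> vertices G \<Longrightarrow> par G v = VS u i \<Longrightarrow> u < v"
  using wf_graph by (auto simp: wf_graph_def)

lemma bij_betw_dw: "bij_betw (dw G) (leaves G) (antileaves G)"
  using wf_graph by (simp add: wf_graph_def)

lemma wp_vertex:
  assumes "v \<in> vertices G"
  shows "wp G v \<in> vertices G" "wp G v \<noteq> v" "wp G (wp G v) = v"
  using wf_graph assms by (simp_all add: wf_graph_def)

lemma finite_all_slots: "finite (all_slots G)"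
proof -
  have "{VS v i | v i. v \<in> vertices G \<and> i \<in> {1..4::nat}} = (\<lambda>(v, i). VS v i) ` (vertices G \<times> {1..4})"
    by auto
  then show ?thesis by (simp add: all_slots_def vertices_def)
qed

lemma leaves_subset: "leaves G \<subseteq> all_slots G"
  by (auto simp: leaves_def half_slots_def child_slots_def all_slots_def)

lemma finite_leaves: "finite (leaves G)"
  using leaves_subset finite_all_slots by (rule finite_subset)

lemma VS_in_all_slots: "v \<in> vertices G \<Longrightarrow> i \<in> {1..4} \<Longrightarrow> VS v i \<in> all_slots G"
  by (auto simp: all_slots_def)

lemma all_slots_cases:
  assumes "s \<in> all_slots G"
  obtains b where "s = RS b" | v i where "s = VS v i" "v \<in> vertices G" "i \<in> {1..4}"
  using assms by (auto simp: all_slots_def)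

lemma child_slots_cases:
  assumes "s \<in> child_slots G"
  obtains b where "s = RS b" | v i where "s = VS v i" "v \<in> vertices G" "i \<in> {2..4}"
  using assms by (auto simp: child_slots_def)

lemma finite_wavy_rows: "finite (wavy_rows G)"
  by (simp add: wavy_rows_def vertices_def)

lemma wavy_rows_subset: "wavy_rows G \<subseteq> vertices G"
  by (auto simp: wavy_rows_def)

lemma zero_notin_wavy_rows: "0 \<notin> wavy_rows G"
  by (auto simp: wavy_rows_def vertices_def)

lemma card_wavy_rows: "2 * card (wavy_rows G) \<le> gorder G"
proof -
  let ?W = "wavy_rows G"
  have "inj_on (wp G) ?W"
    using wp_vertex wavy_rows_subset by (intro inj_on_inverseI[where g = "wp G"]) auto
  moreover have "?W \<inter> wp G ` ?W = {}"
  proof -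
    have "wp G w \<notin> ?W" if "w \<in> ?W" for w
      using that wp_vertex(3)[of w] by (auto simp: wavy_rows_def)
    then show ?thesis by blast
  qed
  ultimately have "2 * card ?W = card (?W \<union> wp G ` ?W)"
    using finite_wavy_rows by (simp add: card_Un_disjoint card_image)
  also have "\<dots> \<le> card (vertices G)"
    using wp_vertex wavy_rows_subset by (intro card_mono) (auto simp: vertices_def)
  finally show ?thesis by (simp add: vertices_def)
qed

section \<open>Faces\<close>

definition face_rel :: "(slot \<times> slot) set" where
  "face_rel = {(s, t). gamma_adj G s t}\<^sup>*"

definition slot_face :: "slot \<Rightarrow> slot set" where
  "slot_face s = face_rel `` {s}"

definition root_face :: "slot set" where
  "root_face = slot_face (RS True)"

lemma equiv_face_rel: "equiv UNIV face_rel"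
proof -
  have "sym {(s, t). gamma_adj G s t}"
    unfolding gamma_adj_def by (auto simp: sym_def insert_commute)
  then show ?thesis
    unfolding face_rel_def by (intro equivI refl_rtrancl sym_rtrancl trans_rtrancl) simp
qed

lemma slot_face_eq: "(s, t) \<in> face_rel \<Longrightarrow> slot_face s = slot_face t"
  unfolding slot_face_def using equiv_face_rel by (rule equiv_class_eq)

lemma slot_face_eq_if_adj: "gamma_adj G s t \<Longrightarrow> slot_face s = slot_face t"
  by (rule slot_face_eq) (simp add: face_rel_def r_into_rtrancl)

lemma in_slot_face: "s \<in> slot_face s"
  by (simp add: slot_face_def face_rel_def)

lemma faces_eq: "faces G = slot_face ` all_slots G"
  by (auto simp: faces_def slot_face_def face_rel_def quotient_def)

lemma finite_faces: "finite (faces G)"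
  using finite_all_slots by (simp add: faces_eq)

lemma slot_face_in_faces: "s \<in> all_slots G \<Longrightarrow> slot_face s \<in> faces G"
  by (simp add: faces_eq)

lemma mem_face_iff:
  assumes "f \<in> faces G"
  shows "s \<in> f \<longleftrightarrow> f = slot_face s"
proof -
  obtain s0 where "f = slot_face s0" using assms by (auto simp: faces_eq)
  then show ?thesis
    by (simp add: slot_face_def equiv_class_eq_iff[OF equiv_face_rel])
qed

lemma root_face_in_faces: "root_face \<in> faces G"
  by (simp add: root_face_def slot_face_in_faces all_slots_def)

lemma slot_face_RS: "slot_face (RS b) = root_face"
  using slot_face_eq_if_adj[of "RS True" "RS False"]
  by (cases b) (auto simp: root_face_def gamma_adj_def)

lemma sum_faces_containing:
  assumes "s \<in> all_slots G"
  shows "(\<Sum>f\<in>faces G. of_bool (s \<in> f) * m f) = (m (slot_face s) :: real)"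
proof -
  have "(\<Sum>f\<in>faces G. of_bool (s \<in> f) * m f) = (\<Sum>f\<in>faces G. if f = slot_face s then m f else 0)"
    by (intro sum.cong) (auto simp: mem_face_iff)
  with assms finite_faces show ?thesis by (simp add: slot_face_in_faces)
qed

lemma Emat_row_dot:
  assumes "v \<in> vertices G"
  shows "(\<Sum>f\<in>faces G. Emat G v f * m f) = m (slot_face (VS v 1)) + m (slot_face (VS v 2))
      - m (slot_face (VS v 3)) - m (slot_face (VS v 4))"
proof -
  have card_pair: "real (card {i \<in> {a, b}. P i}) = of_bool (P a) + of_bool (P b)" if "a \<noteq> b"
    for a b :: nat and P
  proof -
    have "{i \<in> {a, b}. P i} = (if P a then {a} else {}) \<union> (if P b then {b} else {})" by auto
    with that show ?thesis by (auto simp: card_insert_if)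
  qed
  have Emat_eq: "Emat G v f = of_bool (VS v 1 \<in> f) + of_bool (VS v 2 \<in> f)
      - of_bool (VS v 3 \<in> f) - of_bool (VS v 4 \<in> f)" for f
    unfolding Emat_def using card_pair[of 1 2 "\<lambda>i. VS v i \<in> f"] card_pair[of 3 4 "\<lambda>i. VS v i \<in> f"]
    by simp
  have "(\<Sum>f\<in>faces G. Emat G v f * m f) = (\<Sum>f\<in>faces G. of_bool (VS v 1 \<in> f) * m f
      + of_bool (VS v 2 \<in> f) * m f - of_bool (VS v 3 \<in> f) * m f - of_bool (VS v 4 \<in> f) * m f)"
    unfolding Emat_eq by (simp add: algebra_simps)
  also have "\<dots> = m (slot_face (VS v 1)) + m (slot_face (VS v 2))
      - m (slot_face (VS v 3)) - m (slot_face (VS v 4))"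
    by (simp only: sum_subtractf sum.distrib) (simp add: sum_faces_containing VS_in_all_slots assms)
  finally show ?thesis .
qed

lemma Emat_row_sum: "v \<in> vertices G \<Longrightarrow> (\<Sum>f\<in>faces G. Emat G v f) = 0"
  using Emat_row_dot[of v "\<lambda>_. 1"] by simp

text \<open>Row 0, which is not a vertex label, is the indicator of the root face: for an admissible
  attribution it records that the root edges carry momentum r.\<close>
definition E_aug :: "nat \<Rightarrow> slot set \<Rightarrow> real" where
  "E_aug i f = (if i = 0 then of_bool (f = root_face) else Emat G i f)"

lemma E_aug_row_0: "(\<Sum>f\<in>faces G. E_aug 0 f * m f) = m root_face"
proof -
  have "(\<Sum>f\<in>faces G. E_aug 0 f * m f) = (\<Sum>f\<in>faces G. if f = root_face then m f else 0)"
    by (intro sum.cong) (auto simp: E_aug_def)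
  with finite_faces root_face_in_faces show ?thesis by simp
qed

lemma E_aug_eq_Emat: "i \<noteq> 0 \<Longrightarrow> E_aug i = Emat G i"
  by (simp add: E_aug_def fun_eq_iff)

lemma row_kernel_E_aug_eq:
  assumes "0 \<notin> I"
  shows "row_kernel E_aug I J = row_kernel (Emat G) I J"
proof -
  have "E_aug i = Emat G i" if "i \<in> I" for i
    using assms that by (metis E_aug_eq_Emat)
  then show ?thesis by (auto simp: row_kernel_def)
qed

lemma lin_indep_rows_E_aug:
  assumes "I \<subseteq> wavy_rows G" "lin_indep_rows (Emat G) (faces G) I"
  shows "lin_indep_rows E_aug (faces G) (insert 0 I)"
proof -
  have "finite I" using assms(1) finite_wavy_rows by (rule finite_subset)
  have "0 \<notin> I" using assms(1) zero_notin_wavy_rows by blast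
  have "lin_indep_rows E_aug (faces G) I \<longleftrightarrow> lin_indep_rows (Emat G) (faces G) I"
    using \<open>0 \<notin> I\<close> by (intro lin_indep_rows_cong) (metis E_aug_eq_Emat)
  with assms(2) have "lin_indep_rows E_aug (faces G) I" by simp
  moreover have "(\<Sum>f\<in>faces G. E_aug 0 f * 1) \<noteq> 0"
    using E_aug_row_0[of "\<lambda>_. 1"] by simp
  moreover have "(\<Sum>f\<in>faces G. E_aug i f * 1) = 0" if "i \<in> I" for i
  proof -
    have "i \<noteq> 0" using that \<open>0 \<notin> I\<close> by metis
    moreover have "i \<in> vertices G" using that assms(1) wavy_rows_subset by blast
    ultimately show ?thesis by (simp add: E_aug_eq_Emat[OF \<open>i \<noteq> 0\<close>] Emat_row_sum)
  qed
  ultimately show ?thesis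
    using \<open>finite I\<close> \<open>0 \<notin> I\<close> by (intro lin_indep_rows_insert[where u = "\<lambda>_. 1"]) auto
qed

lemma augmented_basis:
  obtains I where "I \<subseteq> wavy_rows G" "card I = rankE G"
    "lin_indep_rows E_aug (faces G) (insert 0 I)"
    "row_kernel E_aug (insert 0 I) (faces G)
       \<subseteq> {m. m root_face = 0} \<inter> row_kernel (Emat G) (wavy_rows G) (faces G)"
proof -
  obtain I where I: "I \<subseteq> wavy_rows G" "card I = rankE G" "lin_indep_rows (Emat G) (faces G) I"
    and maximal: "\<And>w. w \<in> wavy_rows G - I \<Longrightarrow> \<not> lin_indep_rows (Emat G) (faces G) (insert w I)"
    using mat_rank_basis[OF finite_wavy_rows] unfolding rankE_def by blast
  have "finite I" using I(1) finite_wavy_rows by (rule finite_subset)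
  have "0 \<notin> I" using I(1) zero_notin_wavy_rows by blast
  have "row_kernel E_aug (insert 0 I) (faces G)
       \<subseteq> {m. m root_face = 0} \<inter> row_kernel (Emat G) (wavy_rows G) (faces G)"
  proof
    fix m assume m: "m \<in> row_kernel E_aug (insert 0 I) (faces G)"
    then have "m root_face = 0" by (simp add: row_kernel_def E_aug_row_0)
    moreover have "m \<in> row_kernel E_aug I (faces G)"
      using m by (simp add: row_kernel_def)
    then have "m \<in> row_kernel (Emat G) I (faces G)"
      by (simp add: row_kernel_E_aug_eq[OF \<open>0 \<notin> I\<close>])
    then have "m \<in> row_kernel (Emat G) (wavy_rows G) (faces G)"
      using row_kernel_maximal_lin_indep_rows[OF finite_faces \<open>finite I\<close> I(1,3) maximal] by blast
    ultimately show "m \<in> {m. m root_face = 0} \<inter> row_kernel (Emat G) (wavy_rows G) (faces G)"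
      by blast
  qed
  with I(1,2) lin_indep_rows_E_aug[OF I(1,3)] show thesis using that by blast
qed

lemma gamma_adj_par: "v \<in> vertices G \<Longrightarrow> gamma_adj G (par G v) (VS v 1)"
  unfolding gamma_adj_def by blast

lemma gamma_adj_corner:
  "v \<in> vertices G \<Longrightarrow> v < wp G v \<Longrightarrow> i \<in> {1..4} \<Longrightarrow>
    gamma_adj G (VS v i) (VS (wp G v) (corner_perm (pc G v) i))"
  unfolding gamma_adj_def by blast

lemma slot_face_larger_wavy_end:
  assumes "x \<in> vertices G" "x \<notin> wavy_rows G" "i \<in> {1..4}"
  obtains i0 where "i0 \<in> {1..4}" "slot_face (VS x i) = slot_face (VS (wp G x) i0)"
proof -
  let ?y = "wp G x"
  have y: "?y \<in> vertices G" "?y < wp G ?y"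
    using assms(1,2) wp_vertex[OF assms(1)] by (auto simp: wavy_rows_def)
  obtain i0 where i0: "i0 \<in> {1..4}" "corner_perm (pc G ?y) i0 = i"
    using assms(3) by (rule corner_perm_surj)
  have "slot_face (VS ?y i0) = slot_face (VS x i)"
    using slot_face_eq_if_adj[OF gamma_adj_corner[OF y i0(1)]] i0(2) wp_vertex(3)[OF assms(1)]
    by simp
  with i0(1) that show thesis by simp
qed

lemma E_kernel_determined:
  assumes E: "m \<in> row_kernel (Emat G) (wavy_rows G) (faces G)" and root: "m root_face = 0"
    and wavy: "\<And>v. v \<in> wavy_rows G \<Longrightarrow> m (slot_face (VS v 2)) = 0 \<and> m (slot_face (VS v 3)) = 0"
  shows "\<forall>f\<in>faces G. m f = 0"
proof -
  have "\<forall>i\<in>{1..4}. m (slot_face (VS x i)) = 0" if "x \<in> vertices G" for x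
    using that
  proof (induction x rule: less_induct)
    case (less x)
    have slot_1: "m (slot_face (VS x 1)) = 0"
      using child_slots_cases[OF par_child_slot[OF less.prems]]
    proof cases
      case (1 b)
      then show ?thesis
        using slot_face_eq_if_adj[OF gamma_adj_par[OF less.prems]] root by (simp add: slot_face_RS)
    next
      case (2 u i)
      then have "m (slot_face (VS u i)) = 0"
        using less.IH[OF par_heap[OF less.prems 2(1)] 2(2)] by simp
      then show ?thesis
        using slot_face_eq_if_adj[OF gamma_adj_par[OF less.prems]] 2(1) by simp
    qed
    show ?case
    proof (cases "x \<in> wavy_rows G")
      case True
      with wavy have "m (slot_face (VS x 2)) = 0" "m (slot_face (VS x 3)) = 0" by auto
      moreover have "(\<Sum>f\<in>faces G. Emat G x f * m f) = 0"
        using E True by (simp add: row_kernel_def)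
      ultimately have "m (slot_face (VS x 4)) = 0"
        using slot_1 Emat_row_dot[OF less.prems] by simp
      with slot_1 \<open>m (slot_face (VS x 2)) = 0\<close> \<open>m (slot_face (VS x 3)) = 0\<close> show ?thesis
        by (auto simp: atLeastAtMost_iff le_Suc_eq numeral_eq_Suc)
    next
      case False
      have "wp G x < x"
        using False wp_vertex[OF less.prems] less.prems by (auto simp: wavy_rows_def)
      with less.IH wp_vertex(1)[OF less.prems] have "\<forall>i\<in>{1..4}. m (slot_face (VS (wp G x) i)) = 0"
        by blast
      with slot_face_larger_wavy_end[OF less.prems False] show ?thesis by metis
    qed
  qed
  then show ?thesis
    using root by (auto simp: faces_eq slot_face_RS elim!: all_slots_cases)
qed

lemma card_faces_le: "card (faces G) \<le> gorder G + rankE G + 1"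
proof -
  obtain I where I: "I \<subseteq> wavy_rows G" "card I = rankE G"
    "lin_indep_rows E_aug (faces G) (insert 0 I)"
    and kernel: "row_kernel E_aug (insert 0 I) (faces G)
       \<subseteq> {m. m root_face = 0} \<inter> row_kernel (Emat G) (wavy_rows G) (faces G)"
    by (rule augmented_basis)
  have "finite I" using I(1) finite_wavy_rows by (rule finite_subset)
  have "0 \<notin> I" using I(1) zero_notin_wavy_rows by blast
  define D where "D = (\<lambda>v. slot_face (VS v 2)) ` wavy_rows G \<union> (\<lambda>v. slot_face (VS v 3)) ` wavy_rows G"
  have "card (faces G) \<le> card (insert 0 I) + card D"
  proof (rule card_le_if_row_kernel_determined)
    fix m assume "m \<in> row_kernel E_aug (insert 0 I) (faces G)" "\<forall>f\<in>D. m f = 0"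
    with kernel show "\<forall>f\<in>faces G. m f = 0"
      by (intro E_kernel_determined) (auto simp: D_def)
  qed (use \<open>finite I\<close> I(3) finite_faces finite_wavy_rows in \<open>simp_all add: D_def\<close>)
  moreover have "card D \<le> card (wavy_rows G) + card (wavy_rows G)"
    unfolding D_def by (intro card_Un_le[THEN order_trans] add_mono card_image_le finite_wavy_rows)
  ultimately show ?thesis
    using card_wavy_rows \<open>finite I\<close> \<open>0 \<notin> I\<close> I(2) by simp
qed

lemma rankE_less_card_faces: "rankE G + 1 \<le> card (faces G)"
proof -
  obtain I where "I \<subseteq> wavy_rows G" "card I = rankE G"
    "lin_indep_rows E_aug (faces G) (insert 0 I)"
    by (rule augmented_basis)
  moreover have "finite I" "0 \<notin> I"
    using \<open>I \<subseteq> wavy_rows G\<close> finite_wavy_rows zero_notin_wavy_rows finite_subset by blast+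
  ultimately show ?thesis
    using card_le_if_lin_indep_rows[of "insert 0 I" "faces G" E_aug] finite_faces by simp
qed

lemma gdegree_nonneg: "0 \<le> gdegree G"
  using card_faces_le by (simp add: gdegree_def nfaces_def)

section \<open>Momenta of admissible attributions\<close>

lemma admissibleD:
  assumes "(S, j, k) \<in> admissible G r"
  shows "\<And>v. v \<notin> vertices G \<Longrightarrow> S v = 0 \<and> j v = 0 \<and> k v = 0"
    and "\<And>v. v \<in> vertices G \<Longrightarrow> j v \<le> S v \<and> k v \<le> S v"
    and "\<And>v. v \<in> vertices G \<Longrightarrow> mom r (S, j, k) (par G v) = mom r (S, j, k) (VS v 1)"
    and "\<And>l. l \<in> leaves G \<Longrightarrow> mom r (S, j, k) l = mom r (S, j, k) (dw G l)"
    and "\<And>v. v \<in> vertices G \<Longrightarrow> v < wp G v \<Longrightarrow>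
      propag (pc G v) (S v, j v, k v) (S (wp G v), j (wp G v), k (wp G v))"
  using assms unfolding admissible_def mem_Collect_eq prod.case by blast+

lemma admissible_mom_eq_if_adj:
  assumes "a \<in> admissible G r" "gamma_adj G s t"
  shows "mom r a s = mom r a t"
proof -
  obtain S j k where a: "a = (S, j, k)" by (cases a)
  note adm = admissibleD[OF assms(1)[unfolded a]]
  from assms(2) consider
      v where "v \<in> vertices G" "{s, t} = {par G v, VS v 1}"
    | l where "l \<in> leaves G" "{s, t} = {l, dw G l}"
    | v i where "v \<in> vertices G" "v < wp G v" "i \<in> {1..4}"
        "{s, t} = {VS v i, VS (wp G v) (corner_perm (pc G v) i)}"
    | "{s, t} = {RS True, RS False}"
    unfolding gamma_adj_def by blast
  then show ?thesis
  proof cases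
    case (1 v)
    then show ?thesis using adm(3)[of v] by (auto simp: a doubleton_eq_iff)
  next
    case (2 l)
    then show ?thesis using adm(4)[of l] by (auto simp: a doubleton_eq_iff)
  next
    case (3 v i)
    have "wp G v \<in> vertices G" using 3(1) by (rule wp_vertex)
    with 3 adm(2,5)
    have "mom r (S, j, k) (VS v i) = mom r (S, j, k) (VS (wp G v) (corner_perm (pc G v) i))"
      by (intro mom_corner_perm) blast+
    with 3 show ?thesis by (auto simp: a doubleton_eq_iff)
  next
    case 4
    then show ?thesis by (auto simp: a doubleton_eq_iff)
  qed
qed

lemma admissible_mom_eq_on_face:
  assumes "a \<in> admissible G r" "(s, t) \<in> face_rel"
  shows "mom r a s = mom r a t"
  using assms(2) unfolding face_rel_def
  by (induction rule: rtrancl_induct) (auto dest: admissible_mom_eq_if_adj[OF assms(1)])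

definition face_mom :: "nat \<Rightarrow> attribution \<Rightarrow> slot set \<Rightarrow> nat" where
  "face_mom r a f = mom r a (SOME s. s \<in> f)"

lemma face_mom_slot_face:
  assumes "a \<in> admissible G r"
  shows "face_mom r a (slot_face s) = mom r a s"
proof -
  have "(SOME t. t \<in> slot_face s) \<in> slot_face s"
    using in_slot_face by (rule someI)
  then show ?thesis
    unfolding face_mom_def slot_face_def
    by (simp add: admissible_mom_eq_on_face[OF assms, symmetric])
qed

lemma admissible_E_aug_row:
  assumes "a \<in> admissible G r" "i \<in> insert 0 (wavy_rows G)"
  shows "(\<Sum>f\<in>faces G. E_aug i f * real (face_mom r a f)) = (if i = 0 then real r else 0)"
proof (cases "i = 0")
  case True
  then show ?thesis
    using face_mom_slot_face[OF assms(1), of "RS True"] by (simp add: E_aug_row_0 root_face_def)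
next
  case False
  obtain S j k where a: "a = (S, j, k)" by (cases a)
  have "i \<in> vertices G" using assms(2) False wavy_rows_subset by auto
  with admissibleD(2)[OF assms(1)[unfolded a]] have "j i \<le> S i" "k i \<le> S i" by auto
  with False \<open>i \<in> vertices G\<close> show ?thesis
    by (simp add: E_aug_eq_Emat Emat_row_dot face_mom_slot_face[OF assms(1)[unfolded a]] a of_nat_diff)
qed

lemma admissible_eq_if_mom_eq:
  assumes "a \<in> admissible G r" "b \<in> admissible G r"
    and "\<And>s. s \<in> all_slots G \<Longrightarrow> mom r a s = mom r b s"
  shows "a = b"
proof -
  obtain S j k where a: "a = (S, j, k)" by (cases a)
  obtain S' j' k' where b: "b = (S', j', k')" by (cases b)
  note adm = admissibleD[OF assms(1)[unfolded a]] admissibleD[OF assms(2)[unfolded b]]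
  have "S v = S' v \<and> j v = j' v \<and> k v = k' v" for v
  proof (cases "v \<in> vertices G")
    case True
    then have "j v = j' v" "S v - j v = S' v - j' v" "k v = k' v"
      using assms(3)[of "VS v 1"] assms(3)[of "VS v 2"] assms(3)[of "VS v 3"]
      by (simp_all add: a b VS_in_all_slots)
    moreover have "j v \<le> S v" "j' v \<le> S' v" using True adm(2) adm(7) by auto
    ultimately show ?thesis by simp
  next
    case False
    then show ?thesis using adm(1) adm(6) by simp
  qed
  then show ?thesis by (auto simp: a b)
qed

lemma inj_on_face_mom_restrict:
  obtains Q where "Q \<subseteq> faces G" "card Q = card (faces G) - (rankE G + 1)"
    "inj_on (\<lambda>a. restrict (face_mom r a) Q) (admissible G r)"
proof -
  obtain I where I: "I \<subseteq> wavy_rows G" "card I = rankE G"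
    "lin_indep_rows E_aug (faces G) (insert 0 I)"
    by (rule augmented_basis)
  have "finite I" using I(1) finite_wavy_rows by (rule finite_subset)
  have "0 \<notin> I" using I(1) zero_notin_wavy_rows by blast
  obtain P where "pivot_columns E_aug (insert 0 I) (faces G) P"
    using lin_indep_rows_pivot_columns[OF _ finite_faces I(3)] \<open>finite I\<close> by blast
  then have P: "P \<subseteq> faces G" "card P = card (insert 0 I)"
    and pivots: "\<forall>m\<in>row_kernel E_aug (insert 0 I) (faces G).
      (\<forall>f\<in>faces G - P. m f = 0) \<longrightarrow> (\<forall>f\<in>P. m f = 0)"
    by (simp_all add: pivot_columns_def)
  have "inj_on (\<lambda>a. restrict (face_mom r a) (faces G - P)) (admissible G r)"
  proof (rule inj_onI)
    fix a b assume a: "a \<in> admissible G r" and b: "b \<in> admissible G r"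
      and eq: "restrict (face_mom r a) (faces G - P) = restrict (face_mom r b) (faces G - P)"
    define m where "m f = real (face_mom r a f) - real (face_mom r b f)" for f
    have "m \<in> row_kernel E_aug (insert 0 I) (faces G)"
      using admissible_E_aug_row[OF a] admissible_E_aug_row[OF b] I(1)
      by (auto simp: row_kernel_def m_def right_diff_distrib sum_subtractf)
    moreover have "\<forall>f\<in>faces G - P. m f = 0"
      using eq by (auto simp: m_def fun_eq_iff restrict_def split: if_splits)
    ultimately have "\<forall>f\<in>faces G. m f = 0" using pivots by blast
    then have "mom r a s = mom r b s" if "s \<in> all_slots G" for s
      using that by (simp add: m_def slot_face_in_faces face_mom_slot_face[OF a, symmetric]
          face_mom_slot_face[OF b, symmetric])
    then show "a = b" by (rule admissible_eq_if_mom_eq[OF a b])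
  qed
  moreover have "card (faces G - P) = card (faces G) - (rankE G + 1)"
    using P \<open>finite I\<close> \<open>0 \<notin> I\<close> I(2) finite_faces
    by (simp add: card_Diff_subset finite_subset)
  ultimately show thesis using that by blast
qed

text \<open>The root counts as vertex 0, below every heap label.\<close>
fun slot_vertex :: "slot \<Rightarrow> nat" where
  "slot_vertex (RS b) = 0"
| "slot_vertex (VS v i) = v"

lemma half_slot_mom_le:
  assumes "a \<in> admissible G r" "t \<in> half_slots G"
  shows "mom r a t \<le> (\<Sum>l\<in>leaves G. mom r a l)"
proof (cases "slot_type G t")
  case True
  with assms(2) have "t \<in> leaves G" by (simp add: leaves_def)
  then show ?thesis by (intro member_le_sum finite_leaves) auto
next
  case False
  with assms(2) have "t \<in> dw G ` leaves G"
    using bij_betw_dw by (simp add: antileaves_def bij_betw_def)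
  then obtain l where l: "l \<in> leaves G" "t = dw G l" by blast
  obtain S j k where a: "a = (S, j, k)" by (cases a)
  have "mom r a t = mom r a l" using admissibleD(4)[OF assms(1)[unfolded a] l(1)] l(2) a by simp
  also have "\<dots> \<le> (\<Sum>l\<in>leaves G. mom r a l)" using l(1) by (intro member_le_sum finite_leaves) auto
  finally show ?thesis .
qed

text \<open>The momentum j_y of the edge entering a vertex y is at most S_y, the sum of the momenta
  of e_3(y) and e_4(y). Following these edges down the heap-ordered tree doubles the bound
  at most gorder G - slot_vertex t times before reaching half-edges, whose momenta are leaf
  momenta (for anti-leaves through the dashed edges).\<close>
lemma child_slot_mom_le:
  assumes "a \<in> admissible G r" "t \<in> child_slots G"
  shows "mom r a t \<le> 2 ^ (gorder G - slot_vertex t) * (\<Sum>l\<in>leaves G. mom r a l)"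
  using assms(2)
proof (induction t rule: measure_induct_rule[where f = "\<lambda>t. gorder G - slot_vertex t"])
  case (less t)
  let ?L = "\<Sum>l\<in>leaves G. mom r a l"
  show ?case
  proof (cases "t \<in> par G ` vertices G")
    case True
    then obtain y where y: "y \<in> vertices G" "t = par G y" by blast
    obtain S j k where a: "a = (S, j, k)" by (cases a)
    note adm = admissibleD[OF assms(1)[unfolded a]]
    have "slot_vertex t < y"
      unfolding y(2) using y(1) par_heap[OF y(1)] by (cases "par G y") (auto simp: vertices_def)
    moreover have "y \<le> gorder G" using y(1) by (simp add: vertices_def)
    ultimately have smaller: "gorder G - y < gorder G - slot_vertex t" by linarith
    have "mom r a t = j y" using adm(3)[OF y(1)] y(2) a by simp
    also have "\<dots> \<le> mom r a (VS y 3) + mom r a (VS y 4)" using adm(2)[OF y(1)] a by simp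
    also have "\<dots> \<le> 2 ^ (gorder G - y) * ?L + 2 ^ (gorder G - y) * ?L"
      using less.IH[of "VS y 3"] less.IH[of "VS y 4"] smaller y(1)
      by (intro add_mono) (simp_all add: child_slots_def)
    also have "\<dots> = 2 ^ Suc (gorder G - y) * ?L" by simp
    also have "\<dots> \<le> 2 ^ (gorder G - slot_vertex t) * ?L"
      using smaller by (intro mult_right_mono power_increasing) auto
    finally show ?thesis .
  next
    case False
    with less.prems have "mom r a t \<le> ?L"
      by (intro half_slot_mom_le[OF assms(1)]) (simp add: half_slots_def)
    also have "\<dots> \<le> 2 ^ (gorder G - slot_vertex t) * ?L" by simp
    finally show ?thesis .
  qed
qed

lemma mom_le_leaf_sum:
  assumes "a \<in> admissible G r" "s \<in> all_slots G"
  shows "mom r a s \<le> 2 ^ gorder G * (\<Sum>l\<in>leaves G. mom r a l)"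
  using assms(2)
proof (cases rule: all_slots_cases)
  case (1 b)
  then show ?thesis using child_slot_mom_le[OF assms(1), of s] by (simp add: child_slots_def)
next
  case (2 v i)
  show ?thesis
  proof (cases "i = 1")
    case True
    obtain S j k where a: "a = (S, j, k)" by (cases a)
    have "mom r a s = mom r a (par G v)"
      using admissibleD(3)[OF assms(1)[unfolded a] 2(2)] 2(1) True a by simp
    also have "\<dots> \<le> 2 ^ (gorder G - slot_vertex (par G v)) * (\<Sum>l\<in>leaves G. mom r a l)"
      using par_child_slot[OF 2(2)] by (rule child_slot_mom_le[OF assms(1)])
    also have "\<dots> \<le> 2 ^ gorder G * (\<Sum>l\<in>leaves G. mom r a l)"
      by (intro mult_right_mono power_increasing) auto
    finally show ?thesis .
  next
    case False
    with 2 have "s \<in> child_slots G" by (auto simp: child_slots_def)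
    then have "mom r a s \<le> 2 ^ (gorder G - slot_vertex s) * (\<Sum>l\<in>leaves G. mom r a l)"
      by (rule child_slot_mom_le[OF assms(1)])
    also have "\<dots> \<le> 2 ^ gorder G * (\<Sum>l\<in>leaves G. mom r a l)"
      by (intro mult_right_mono power_increasing) auto
    finally show ?thesis .
  qed
qed

lemma face_mom_le_leaf_sum:
  assumes "a \<in> admissible G r" "f \<in> faces G"
  shows "face_mom r a f \<le> 2 ^ gorder G * (\<Sum>l\<in>leaves G. mom r a l)"
proof -
  obtain s where "s \<in> all_slots G" "f = slot_face s" using assms(2) by (auto simp: faces_eq)
  then show ?thesis using mom_le_leaf_sum[OF assms(1)] by (simp add: face_mom_slot_face[OF assms(1)])
qed

lemma amplitude_le_NN_powr_degree:
  "\<exists>C. \<forall>p. 0 < p \<and> p < 1 \<longrightarrow>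
     amplitude p r G \<le> ennreal (C * NN p powr (- real_of_int (gdegree G)))"
proof -
  obtain Q where Q: "Q \<subseteq> faces G" "card Q = card (faces G) - (rankE G + 1)"
    and inj: "inj_on (\<lambda>a. restrict (face_mom r a) Q) (admissible G r)"
    by (rule inj_on_face_mom_restrict)
  define L where "L a = (\<Sum>l\<in>leaves G. mom r a l)" for a
  define c where "c = card Q * 2 ^ gorder G + 1"
  have coercive: "(\<Sum>q\<in>Q. restrict (face_mom r a) Q q) \<le> c * L a" if a: "a \<in> admissible G r" for a
  proof -
    have "(\<Sum>q\<in>Q. restrict (face_mom r a) Q q) \<le> card Q * (2 ^ gorder G * L a)"
      using sum_bounded_above[of Q "face_mom r a" "2 ^ gorder G * L a"]
        face_mom_le_leaf_sum[OF a] Q(1) by (auto simp: L_def)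
    also have "\<dots> \<le> c * L a" by (simp add: c_def algebra_simps)
    finally show ?thesis .
  qed
  have degree: "real_of_int (gdegree G) = real (gorder G) - real (card Q)"
    using Q(2) rankE_less_card_faces by (simp add: gdegree_def nfaces_def of_nat_diff)
  show ?thesis
  proof (intro exI[of _ "real c ^ card Q"] allI impI)
    fix p :: real assume p: "0 < p \<and> p < 1"
    have NN: "real c / (1 - p) = real c * NN p" "0 < NN p" using p by (auto simp: NN_def)
    have "amplitude p r G
        = ennreal (NN p powr (- real (gorder G))) * (\<Sum>\<^sub>\<infinity>a\<in>admissible G r. ennreal (p ^ L a))"
      by (simp add: amplitude_def L_def power_sum)
    also have "\<dots> \<le> ennreal (NN p powr (- real (gorder G))) * ennreal ((real c / (1 - p)) ^ card Q)"
      using p inj coercive finite_subset[OF Q(1) finite_faces]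
      by (intro mult_left_mono infsum_power_le_if_inj_coordinates) (auto simp: c_def)
    also have "\<dots> = ennreal (NN p powr (- real (gorder G)) * (real c * NN p) ^ card Q)"
      using NN by (simp add: ennreal_mult)
    also have "NN p powr (- real (gorder G)) * (real c * NN p) ^ card Q
        = real c ^ card Q * NN p powr (- real_of_int (gdegree G))"
      using NN(2) by (simp add: degree power_mult_distrib powr_realpow[symmetric] powr_diff powr_minus
          field_simps)
    finally show "amplitude p r G \<le> ennreal (real c ^ card Q * NN p powr (- real_of_int (gdegree G)))" .
  qed
qed

end

theorem proposition1:
  fixes G :: graph and r :: nat
  assumes "wf_graph G"
  shows "gdegree G \<ge> 0 \<and>
         (\<exists>C :: real. \<forall>p :: real. 0 < p \<and> p < 1 \<longrightarrow>
            amplitude p r G \<le> ennreal (C * NN p powr (- real_of_int (gdegree G))))"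
proof -
  interpret graph_of_order G by (rule graph_of_order.intro) (rule assms)
  show ?thesis using gdegree_nonneg amplitude_le_NN_powr_degree by blast
qed

end
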